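(* Let $E=\{1,2,\ldots,D\}$ be a finite state space and let $(J_n,T_n)_{n\in\mathbb{N}}$ be random variables on a probability space $(\Omega,\mathcal{F},\mathbb{P})$ with $J_n\in E$, $T_n\in\mathbb{N}$, $T_0=0$, $T_n<T_{n+1}$, and age index $A_n=a+T_n$ for a fixed initial age $a$. Assume that $(J_n,T_n,A_n)$ is a non-homogeneous age-indexed Markov renewal process, i.e. the conditional distribution of $(J_{n+1},T_{n+1})$ given the whole past $\sigma(J_h,T_h,A_h,\ h\le n)$ depends only on $(J_n,T_n,A_n)$, through the kernel $$ {}^{b}Q_{ij}(s;t)=\mathbb{P}[J_{n+1}=j,\,T_{n+1}\le t\mid J_n=i,\,T_n=s,\,A_n=b],\qquad b=a+s. $$ Put ${}^{b}q_{ij}(s;t)={}^{b}Q_{ij}(s;t)-{}^{b}Q_{ij}(s;t-1)$ for $t>s$ and ${}^{b}q_{ij}(s;s)=0$, and ${}^{b}\overline{H}_i(s;t)=1-\sum_{j\in E}{}^{b}Q_{ij}(s;t)$. Let $N(t)=\sup\{n:T_n\le t\}$, $Z(t)=J_{N(t)}$, $B(t)=t-T_{N(t)}$, and for integers $0\le u\le s\le t$, $u'\ge 0$, $i,j\in E$ define $$ {}^{a+s-u}\phi_{ij}(u,s;u',t)=\mathbb{P}\big[Z(t)=j,\,B(t)=u'\mid Z(s)=i,\,B(s)=u,\,A_{N(s)}=a+T_{N(s)}\big] $$ (whenever ${}^{a+s-u}\overline{H}_i(s-u;s)>0$). Then $$ {}^{a+s-u}\phi_{ij}(u,s;u',t)=1_{\{i=j\}}1_{\{u'=t-s+u\}}\frac{{}^{a+s-u}\overline{H}_i(s-u;t)}{{}^{a+s-u}\overline{H}_i(s-u;s)}+\sum_{k\in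 E}\sum_{\theta=s+1}^{t-u'}\frac{{}^{a+s-u}q_{ik}(s-u;\theta)}{{}^{a+s-u}\overline{H}_i(s-u;s)}\;{}^{a+\theta}\phi_{kj}(0,\theta;u',t). $$
   Context: Here $J_n$ is the (health) state entered at the $n$-th transition and $T_n$ its time; $Z(t)$ is the age-indexed semi-Markov chain, $B(t)$ the backward recurrence time (time elapsed since the last transition), and the left superscript on $Q$, $q$, $\overline{H}$, $\phi$ denotes the age of the individual at the time of the last transition (entrance into the current state). Thus ${}^{b}q_{ij}(s;t)=\mathbb{P}[J_{n+1}=j,T_{n+1}=t\mid J_n=i,T_n=s,A_n=b]$ and ${}^{b}\overline{H}_i(s;t)=\mathbb{P}[T_{n+1}>t\mid J_n=i,T_n=s,A_n=b]$ with $b=a+s$. *)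

theory Defs
  imports "HOL-Probability.Probability"
begin

definition NN :: "(nat \<Rightarrow> 'w \<Rightarrow> nat) \<Rightarrow> nat \<Rightarrow> 'w \<Rightarrow> nat" where
  "NN T t \<omega> = Max {n. T n \<omega> \<le> t}"

definition ZZ :: "(nat \<Rightarrow> 'w \<Rightarrow> nat) \<Rightarrow> (nat \<Rightarrow> 'w \<Rightarrow> nat) \<Rightarrow> nat \<Rightarrow> 'w \<Rightarrow> nat" where
  "ZZ J T t \<omega> = J (NN T t \<omega>) \<omega>"

definition BB :: "(nat \<Rightarrow> 'w \<Rightarrow> nat) \<Rightarrow> nat \<Rightarrow> 'w \<Rightarrow> nat" where
  "BB T t \<omega> = t - T (NN T t \<omega>) \<omega>"

definition AA :: "nat \<Rightarrow> (nat \<Rightarrow> 'w \<Rightarrow> nat) \<Rightarrow> nat \<Rightarrow> 'w \<Rightarrow> nat" where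
  "AA a T n \<omega> = a + T n \<omega>"

text \<open>Kernel Q: arguments are (age b) (state i) (state j) (time s) (time t),
  i.e. Q b i j s t = ^bQ_ij(s;t).  Derived quantities:\<close>
definition qk :: "(nat \<Rightarrow> nat \<Rightarrow> nat \<Rightarrow> nat \<Rightarrow> nat \<Rightarrow> real) \<Rightarrow> nat \<Rightarrow> nat \<Rightarrow> nat \<Rightarrow> nat \<Rightarrow> nat \<Rightarrow> real" where
  "qk Q b i j s t = (if s < t then Q b i j s t - Q b i j s (t - 1) else 0)"

definition Hbar :: "nat \<Rightarrow> (nat \<Rightarrow> nat \<Rightarrow> nat \<Rightarrow> nat \<Rightarrow> nat \<Rightarrow> real) \<Rightarrow> nat \<Rightarrow> nat \<Rightarrow> nat \<Rightarrow> nat \<Rightarrow> real" where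
  "Hbar D Q b i s t = 1 - (\<Sum>j\<in>{1..D}. Q b i j s t)"

text \<open>^b phi_ij(u,s;u',t) = P[Z(t)=j, B(t)=u' | Z(s)=i, B(s)=u, A_{N(s)} = b]
  (with b = a+s-u = a + T_{N(s)} on the conditioning event).\<close>
definition phi :: "'w measure \<Rightarrow> nat \<Rightarrow> (nat \<Rightarrow> 'w \<Rightarrow> nat) \<Rightarrow> (nat \<Rightarrow> 'w \<Rightarrow> nat)
    \<Rightarrow> nat \<Rightarrow> nat \<Rightarrow> nat \<Rightarrow> nat \<Rightarrow> nat \<Rightarrow> nat \<Rightarrow> nat \<Rightarrow> real" where
  "phi M a J T b i j u s u' t =
     cond_prob M (\<lambda>\<omega>. ZZ J T t \<omega> = j \<and> BB T t \<omega> = u')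
                 (\<lambda>\<omega>. ZZ J T s \<omega> = i \<and> BB T s \<omega> = u \<and> AA a T (NN T s \<omega>) \<omega> = b)"

end

(*
  Condition on the whole path up to the last jump before s, i.e. on a history
  (J_0,T_0),...,(J_n,T_n) with J_n = i, T_n = s - u < s < T_(n+1).  The state event
  {Z(s) = i, B(s) = u} is the disjoint union of these history events, and by the
  Markov renewal property the probability of surviving in i beyond s, or of the next
  jump going to k at time theta, factorises on each of them as the probability of the
  history times Hbar resp. q.  The same factorisation, iterated, shows by induction on
  t - theta that on any history ending in (k, theta) the probability of
  {Z(t) = j, B(t) = u'} is the history probability times a number phi_rec k theta,
  the solution of the renewal recursion; this number is therefore the conditional
  probability phi(0,theta;u',t).  Summing over histories, their total probability
  cancels in the conditional probability phi(u,s;u',t).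
*)
theory Submission
  imports Defs
begin

lemma (in prob_space) prob_conj_split:
  assumes "{\<omega>\<in>space M. P \<omega>} \<in> events" "{\<omega>\<in>space M. R \<omega>} \<in> events"
  shows "\<P>(\<omega> in M. P \<omega>) = \<P>(\<omega> in M. P \<omega> \<and> R \<omega>) + \<P>(\<omega> in M. P \<omega> \<and> \<not> R \<omega>)"
proof -
  have "{\<omega>\<in>space M. P \<omega>} = {\<omega>\<in>space M. P \<omega> \<and> R \<omega>} \<union> {\<omega>\<in>space M. P \<omega> \<and> \<not> R \<omega>}" by auto
  moreover have "{\<omega>\<in>space M. P \<omega> \<and> R \<omega>} \<in> events" "{\<omega>\<in>space M. P \<omega> \<and> \<not> R \<omega>} \<in> events"
    using assms by (auto intro: sets.sets_Collect_conj sets.sets_Collect_neg)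
  ultimately show ?thesis by (auto intro!: finite_measure_Union)
qed

lemma (in prob_space) prob_Collect_cong:
  "(\<And>\<omega>. \<omega> \<in> space M \<Longrightarrow> P \<omega> \<longleftrightarrow> P' \<omega>) \<Longrightarrow> \<P>(\<omega> in M. P \<omega>) = \<P>(\<omega> in M. P' \<omega>)"
  by (rule arg_cong[where f=prob]) auto

locale age_indexed_mrp = prob_space M for M :: "'w measure" +
  fixes D a :: nat and J T :: "nat \<Rightarrow> 'w \<Rightarrow> nat"
    and Q :: "nat \<Rightarrow> nat \<Rightarrow> nat \<Rightarrow> nat \<Rightarrow> nat \<Rightarrow> real"
  assumes measJ[measurable]: "\<And>n. J n \<in> measurable M (count_space UNIV)"
    and measT[measurable]: "\<And>n. T n \<in> measurable M (count_space UNIV)"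
    and Jrange: "\<And>n \<omega>. \<omega> \<in> space M \<Longrightarrow> J n \<omega> \<in> {1..D}"
    and T0: "\<And>\<omega>. \<omega> \<in> space M \<Longrightarrow> T 0 \<omega> = 0"
    and Tmono: "\<And>n \<omega>. \<omega> \<in> space M \<Longrightarrow> T n \<omega> < T (Suc n) \<omega>"
    and MRP: "\<And>n js ts k r.
       k \<in> {1..D} \<Longrightarrow>
       \<P>(\<omega> in M. \<forall>h\<le>n. J h \<omega> = js h \<and> T h \<omega> = ts h \<and> AA a T h \<omega> = a + ts h) > 0 \<Longrightarrow>
       cond_prob M (\<lambda>\<omega>. J (Suc n) \<omega> = k \<and> T (Suc n) \<omega> \<le> r)
                   (\<lambda>\<omega>. \<forall>h\<le>n. J h \<omega> = js h \<and> T h \<omega> = ts h \<and> AA a T h \<omega> = a + ts h)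
         = Q (a + ts n) (js n) k (ts n) r"
begin

lemma strict_mono_T: "\<omega> \<in> space M \<Longrightarrow> strict_mono (\<lambda>n. T n \<omega>)"
  by (simp add: strict_mono_Suc_iff Tmono)

lemma T_le_iff: "\<omega> \<in> space M \<Longrightarrow> T m \<omega> \<le> T n \<omega> \<longleftrightarrow> m \<le> n"
  using strict_mono_less_eq[OF strict_mono_T] by blast

lemma NN_eqI:
  assumes "\<omega> \<in> space M" "T m \<omega> \<le> s" "s < T (Suc m) \<omega>"
  shows "NN T s \<omega> = m"
proof -
  have "T n \<omega> \<le> s \<longleftrightarrow> n \<le> m" for n
    using assms T_le_iff[OF assms(1), of n m] T_le_iff[OF assms(1), of "Suc m" n] by auto
  then have "{n. T n \<omega> \<le> s} = {..m}" by auto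
  then show ?thesis unfolding NN_def by (auto intro: Max_eqI)
qed

lemma NN_bounds:
  assumes "\<omega> \<in> space M"
  shows "T (NN T s \<omega>) \<omega> \<le> s" "s < T (Suc (NN T s \<omega>)) \<omega>"
proof -
  let ?S = "{n. T n \<omega> \<le> s}"
  have "n \<le> s" if "n \<in> ?S" for n
    using strict_mono_imp_increasing[OF strict_mono_T[OF assms], of n] that by simp
  then have "?S \<subseteq> {..s}" by (simp add: subset_iff)
  then have fin: "finite ?S" using finite_subset by blast
  have "0 \<in> ?S" using T0[OF assms] by simp
  then have "Max ?S \<in> ?S" using Max_in fin by blast
  moreover have "Suc (Max ?S) \<notin> ?S" using Max_ge[OF fin, of "Suc (Max ?S)"] by auto
  ultimately show "T (NN T s \<omega>) \<omega> \<le> s" "s < T (Suc (NN T s \<omega>)) \<omega>" by (auto simp: NN_def)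
qed

lemma measurable_NN[measurable]: "NN T s \<in> measurable M (count_space UNIV)"
proof (subst measurable_count_space_eq2_countable, safe)
  fix m
  have "NN T s -` {m} \<inter> space M = {\<omega>\<in>space M. T m \<omega> \<le> s \<and> s < T (Suc m) \<omega>}"
    using NN_eqI NN_bounds by blast
  then show "NN T s -` {m} \<inter> space M \<in> sets M" by simp
qed simp

lemma measurable_ZZ[measurable]: "ZZ J T s \<in> measurable M (count_space UNIV)"
  unfolding ZZ_def by (rule measurable_compose_countable[OF measJ measurable_NN])

lemma measurable_T_NN[measurable]: "(\<lambda>\<omega>. T (NN T s \<omega>) \<omega>) \<in> measurable M (count_space UNIV)"
  by (rule measurable_compose_countable[OF measT measurable_NN])

lemma measurable_BB[measurable]: "BB T s \<in> measurable M (count_space UNIV)"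
  unfolding BB_def by measurable

definition history :: "(nat \<times> nat) list \<Rightarrow> 'w \<Rightarrow> bool" where
  "history xs \<omega> \<longleftrightarrow> map (\<lambda>h. (J h \<omega>, T h \<omega>)) [0..<length xs] = xs"

lemma history_iff: "history xs \<omega> \<longleftrightarrow> (\<forall>h<length xs. J h \<omega> = fst (xs ! h) \<and> T h \<omega> = snd (xs ! h))"
proof -
  have "history xs \<omega> \<longleftrightarrow> map (\<lambda>h. (J h \<omega>, T h \<omega>)) [0..<length xs] = map (nth xs) [0..<length xs]"
    by (simp only: history_def map_nth)
  also have "\<dots> \<longleftrightarrow> (\<forall>h<length xs. J h \<omega> = fst (xs ! h) \<and> T h \<omega> = snd (xs ! h))"
    by (auto simp only: map_eq_conv set_upt atLeastLessThan_iff prod_eq_iff fst_conv snd_conv)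
  finally show ?thesis .
qed

lemma sets_history[measurable]: "{\<omega>\<in>space M. history xs \<omega>} \<in> sets M"
  unfolding history_iff by measurable

lemma history_snoc:
  "history (xs @ [(k, r)]) \<omega> \<longleftrightarrow> history xs \<omega> \<and> J (length xs) \<omega> = k \<and> T (length xs) \<omega> = r"
  unfolding history_iff by (auto simp: nth_append less_Suc_eq)

lemma history_last:
  assumes "history xs \<omega>" "xs \<noteq> []" "last xs = (k, \<theta>)"
  shows "J (length xs - 1) \<omega> = k" "T (length xs - 1) \<omega> = \<theta>"
  using assms by (auto simp: history_iff last_conv_nth)

lemma history_before_next_jump:
  assumes "\<omega> \<in> space M" "history xs \<omega>" "xs \<noteq> []" "last xs = (k, \<theta>)"
  shows "\<theta> < T (length xs) \<omega>"
  using history_last(2)[OF assms(2-4)] Tmono[OF assms(1), of "length xs - 1"] assms(3) by simp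

lemma NN_history:
  assumes "\<omega> \<in> space M" "history xs \<omega>" "xs \<noteq> []" "last xs = (k, \<theta>)"
    and "\<theta> \<le> r" "r < T (length xs) \<omega>"
  shows "NN T r \<omega> = length xs - 1"
  using NN_eqI[OF assms(1)] history_last(2)[OF assms(2-4)] assms(3,5,6) by simp

lemma prob_history_jump_le:
  assumes xs: "xs \<noteq> []" "last xs = (i, \<theta>)" and k: "k \<in> {1..D}"
  shows "\<P>(\<omega> in M. history xs \<omega> \<and> J (length xs) \<omega> = k \<and> T (length xs) \<omega> \<le> r)
       = \<P>(\<omega> in M. history xs \<omega>) * Q (a + \<theta>) i k \<theta> r"
proof -
  obtain n where n: "length xs = Suc n" using xs(1) by (cases xs) auto
  have last: "xs ! n = (i, \<theta>)" using xs n by (simp add: last_conv_nth)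
  have past: "(\<forall>h\<le>n. J h \<omega> = fst (xs ! h) \<and> T h \<omega> = snd (xs ! h) \<and> AA a T h \<omega> = a + snd (xs ! h))
      \<longleftrightarrow> history xs \<omega>" for \<omega>
    unfolding history_iff n AA_def by (simp add: less_Suc_eq_le)
  show ?thesis
  proof (cases "\<P>(\<omega> in M. history xs \<omega>) > 0")
    case True
    then have "0 < \<P>(\<omega> in M. \<forall>h\<le>n. J h \<omega> = fst (xs ! h) \<and> T h \<omega> = snd (xs ! h) \<and> AA a T h \<omega> = a + snd (xs ! h))"
      by (simp only: past)
    from MRP[OF k this] have "cond_prob M (\<lambda>\<omega>. J (Suc n) \<omega> = k \<and> T (Suc n) \<omega> \<le> r) (history xs) = Q (a + \<theta>) i k \<theta> r"
      by (simp only: past last fst_conv snd_conv)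
    moreover have "\<P>(\<omega> in M. (J (Suc n) \<omega> = k \<and> T (Suc n) \<omega> \<le> r) \<and> history xs \<omega>)
        = \<P>(\<omega> in M. history xs \<omega> \<and> J (length xs) \<omega> = k \<and> T (length xs) \<omega> \<le> r)"
      by (rule prob_Collect_cong) (auto simp: n)
    ultimately show ?thesis
      using True by (simp add: cond_prob_def field_simps)
  next
    case False
    then have "\<P>(\<omega> in M. history xs \<omega>) = 0" by (simp add: not_less measure_le_0_iff)
    moreover have "\<P>(\<omega> in M. history xs \<omega> \<and> J (length xs) \<omega> = k \<and> T (length xs) \<omega> \<le> r)
        \<le> \<P>(\<omega> in M. history xs \<omega>)"
      by (intro finite_measure_mono) auto
    ultimately show ?thesis by (simp add: measure_le_0_iff)
  qed
qed

lemma prob_history_snoc: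
  assumes xs: "xs \<noteq> []" "last xs = (i, \<theta>)" and k: "k \<in> {1..D}" and r: "\<theta> < r"
  shows "\<P>(\<omega> in M. history (xs @ [(k, r)]) \<omega>) = \<P>(\<omega> in M. history xs \<omega>) * qk Q (a + \<theta>) i k \<theta> r"
proof -
  let ?n = "length xs"
  let ?jump_le = "\<lambda>r \<omega>. history xs \<omega> \<and> J ?n \<omega> = k \<and> T ?n \<omega> \<le> r"
  have "\<P>(\<omega> in M. ?jump_le r \<omega>)
      = \<P>(\<omega> in M. ?jump_le r \<omega> \<and> T ?n \<omega> \<le> r - 1) + \<P>(\<omega> in M. ?jump_le r \<omega> \<and> \<not> T ?n \<omega> \<le> r - 1)"
    by (rule prob_conj_split) measurable
  also have "\<P>(\<omega> in M. ?jump_le r \<omega> \<and> T ?n \<omega> \<le> r - 1) = \<P>(\<omega> in M. ?jump_le (r - 1) \<omega>)"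
    using r by (intro prob_Collect_cong) auto
  also have "\<P>(\<omega> in M. ?jump_le r \<omega> \<and> \<not> T ?n \<omega> \<le> r - 1) = \<P>(\<omega> in M. history (xs @ [(k, r)]) \<omega>)"
    using r by (intro prob_Collect_cong) (auto simp: history_snoc)
  finally show ?thesis
    using r unfolding prob_history_jump_le[OF xs k] qk_def by (simp add: algebra_simps)
qed

lemma prob_history_survives:
  assumes xs: "xs \<noteq> []" "last xs = (i, \<theta>)"
  shows "\<P>(\<omega> in M. history xs \<omega> \<and> r < T (length xs) \<omega>) = \<P>(\<omega> in M. history xs \<omega>) * Hbar D Q (a + \<theta>) i \<theta> r"
proof -
  let ?n = "length xs"
  have "\<P>(\<omega> in M. history xs \<omega> \<and> T ?n \<omega> \<le> r)
      = (\<Sum>k\<in>{1..D}. \<P>(\<omega> in M. history xs \<omega> \<and> J ?n \<omega> = k \<and> T ?n \<omega> \<le> r))"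
    using Jrange by (intro prob_sum) auto
  also have "\<dots> = \<P>(\<omega> in M. history xs \<omega>) * (\<Sum>k\<in>{1..D}. Q (a + \<theta>) i k \<theta> r)"
    by (simp add: prob_history_jump_le[OF xs] sum_distrib_left)
  finally show ?thesis
    using prob_conj_split[of "history xs" "\<lambda>\<omega>. T ?n \<omega> \<le> r"] by (simp add: Hbar_def not_le algebra_simps)
qed

definition state_event :: "nat \<Rightarrow> nat \<Rightarrow> nat \<Rightarrow> 'w \<Rightarrow> bool" where
  "state_event s u i \<omega> \<longleftrightarrow> ZZ J T s \<omega> = i \<and> BB T s \<omega> = u \<and> AA a T (NN T s \<omega>) \<omega> = a + s - u"

lemma sets_state_event[measurable]: "{\<omega>\<in>space M. state_event s u i \<omega>} \<in> sets M"
  unfolding state_event_def AA_def by measurable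

text \<open>The length and time bounds only serve to make this set of candidate paths finite.\<close>
definition histories :: "nat \<Rightarrow> nat \<Rightarrow> nat \<Rightarrow> (nat \<times> nat) list set" where
  "histories s u i = {xs. xs \<noteq> [] \<and> length xs \<le> Suc s \<and> set xs \<subseteq> {1..D} \<times> {0..s} \<and> last xs = (i, s - u)}"

lemma finite_histories: "finite (histories s u i)"
  by (rule finite_subset[OF _ finite_lists_length_le[of "{1..D} \<times> {0..s}" "Suc s"]])
     (auto simp: histories_def)

lemma history_unique:
  assumes \<omega>: "\<omega> \<in> space M" and "history xs \<omega>" "history ys \<omega>" "xs \<in> histories s u i" "ys \<in> histories s u i"
    and "s < T (length xs) \<omega>" "s < T (length ys) \<omega>"
  shows "xs = ys"
proof -
  have path: "zs = map (\<lambda>h. (J h \<omega>, T h \<omega>)) [0..<Suc (NN T s \<omega>)]"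
    if "history zs \<omega>" "zs \<in> histories s u i" "s < T (length zs) \<omega>" for zs
  proof -
    have "length zs = Suc (NN T s \<omega>)"
      using NN_history[OF \<omega> \<open>history zs \<omega>\<close>, of i "s - u" s] that by (auto simp: histories_def)
    then show ?thesis using \<open>history zs \<omega>\<close> unfolding history_def by simp
  qed
  show ?thesis using path[of xs] path[of ys] assms by simp
qed

lemma state_event_iff_history:
  assumes \<omega>: "\<omega> \<in> space M" and "u \<le> s"
  shows "state_event s u i \<omega> \<longleftrightarrow> (\<exists>xs\<in>histories s u i. history xs \<omega> \<and> s < T (length xs) \<omega>)"
proof
  assume event: "state_event s u i \<omega>"
  define m where "m = NN T s \<omega>"
  define xs where "xs = map (\<lambda>h. (J h \<omega>, T h \<omega>)) [0..<Suc m]"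
  have bounds: "T m \<omega> \<le> s" "s < T (Suc m) \<omega>" using NN_bounds[OF \<omega>] by (auto simp: m_def)
  have "m \<le> s" using strict_mono_imp_increasing[OF strict_mono_T[OF \<omega>], of m] bounds by simp
  moreover have "T h \<omega> \<le> s" if "h \<le> m" for h using T_le_iff[OF \<omega>, of h m] that bounds by simp
  moreover have "last xs = (i, s - u)"
    using event bounds by (auto simp: xs_def m_def state_event_def ZZ_def BB_def)
  ultimately have "xs \<in> histories s u i" using Jrange[OF \<omega>] by (auto simp: histories_def xs_def)
  moreover have "history xs \<omega>" "s < T (length xs) \<omega>" using bounds by (simp_all add: history_def xs_def)
  ultimately show "\<exists>xs\<in>histories s u i. history xs \<omega> \<and> s < T (length xs) \<omega>" by blast
next
  assume "\<exists>xs\<in>histories s u i. history xs \<omega> \<and> s < T (length xs) \<omega>"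
  then obtain xs where xs: "xs \<noteq> []" "last xs = (i, s - u)" "history xs \<omega>" "s < T (length xs) \<omega>"
    by (auto simp: histories_def)
  then show "state_event s u i \<omega>"
    using NN_history[OF \<omega> xs(3,1,2), of s] history_last[OF xs(3,1,2)] \<open>u \<le> s\<close>
    by (simp add: state_event_def ZZ_def BB_def AA_def)
qed

lemma prob_state_event_conj:
  assumes "u \<le> s" and [measurable]: "{\<omega>\<in>space M. R \<omega>} \<in> sets M"
  shows "\<P>(\<omega> in M. R \<omega> \<and> state_event s u i \<omega>)
       = (\<Sum>xs\<in>histories s u i. \<P>(\<omega> in M. history xs \<omega> \<and> s < T (length xs) \<omega> \<and> R \<omega>))"
proof (rule prob_sum[OF finite_histories, where Q = "\<lambda>\<omega>. R \<omega> \<and> state_event s u i \<omega>"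
      and P = "\<lambda>xs \<omega>. history xs \<omega> \<and> s < T (length xs) \<omega> \<and> R \<omega>"])
  show "AE \<omega> in M. (\<forall>xs\<in>histories s u i. history xs \<omega> \<and> s < T (length xs) \<omega> \<and> R \<omega> \<longrightarrow> R \<omega> \<and> state_event s u i \<omega>)
     \<and> (R \<omega> \<and> state_event s u i \<omega> \<longrightarrow> (\<exists>!xs\<in>histories s u i. history xs \<omega> \<and> s < T (length xs) \<omega> \<and> R \<omega>))"
  proof (rule AE_I2)
    fix \<omega> assume \<omega>: "\<omega> \<in> space M"
    show "(\<forall>xs\<in>histories s u i. history xs \<omega> \<and> s < T (length xs) \<omega> \<and> R \<omega> \<longrightarrow> R \<omega> \<and> state_event s u i \<omega>)
     \<and> (R \<omega> \<and> state_event s u i \<omega> \<longrightarrow> (\<exists>!xs\<in>histories s u i. history xs \<omega> \<and> s < T (length xs) \<omega> \<and> R \<omega>))"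
      using state_event_iff_history[OF \<omega> assms(1)] history_unique[OF \<omega>] by blast
  qed
  show "{\<omega>\<in>space M. history xs \<omega> \<and> s < T (length xs) \<omega> \<and> R \<omega>} \<in> events" for xs
    by measurable
  show "{\<omega>\<in>space M. R \<omega> \<and> state_event s u i \<omega>} \<in> events"
    by (intro sets.sets_Collect_conj assms(2) sets_state_event)
qed

lemma prob_state_event:
  assumes "u \<le> s"
  shows "\<P>(\<omega> in M. state_event s u i \<omega>)
       = (\<Sum>xs\<in>histories s u i. \<P>(\<omega> in M. history xs \<omega>)) * Hbar D Q (a + (s - u)) i (s - u) s"
proof -
  have "\<P>(\<omega> in M. history xs \<omega> \<and> s < T (length xs) \<omega>)
      = \<P>(\<omega> in M. history xs \<omega>) * Hbar D Q (a + (s - u)) i (s - u) s"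
    if "xs \<in> histories s u i" for xs
    using that by (intro prob_history_survives) (auto simp: histories_def)
  then show ?thesis
    using prob_state_event_conj[OF assms, of "\<lambda>_. True" i] by (simp add: sum_distrib_right)
qed

context
  fixes j u' t :: nat
begin

definition target :: "'w \<Rightarrow> bool" where
  "target \<omega> \<longleftrightarrow> ZZ J T t \<omega> = j \<and> BB T t \<omega> = u'"

lemma sets_target[measurable]: "{\<omega>\<in>space M. target \<omega>} \<in> sets M"
  unfolding target_def by measurable

text \<open>The right-hand side of the renewal equation, read as a recursion in \<open>\<theta>\<close>.\<close>
function phi_rec :: "nat \<Rightarrow> nat \<Rightarrow> real" where
  "phi_rec k \<theta> = (if k = j \<and> u' = t - \<theta> then Hbar D Q (a + \<theta>) k \<theta> t else 0)
     + (\<Sum>k'\<in>{1..D}. \<Sum>\<theta>'\<in>{\<theta>+1..t-u'}. qk Q (a + \<theta>) k k' \<theta> \<theta>' * phi_rec k' \<theta>')"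
  by pat_completeness auto
termination by (relation "Wellfounded.measure (\<lambda>(k, \<theta>). t - \<theta>)") auto

declare phi_rec.simps[simp del]

lemma phi_rec_eq_0: "\<theta> \<le> t \<Longrightarrow> t - u' < \<theta> \<Longrightarrow> phi_rec k \<theta> = 0"
  by (subst phi_rec.simps) auto

lemma sum_phi_rec_truncate:
  "(\<Sum>\<theta>'\<in>{r+1..t}. f \<theta>' * phi_rec k \<theta>') = (\<Sum>\<theta>'\<in>{r+1..t-u'}. f \<theta>' * phi_rec k \<theta>')"
  by (rule sum.mono_neutral_right) (auto simp: phi_rec_eq_0)

lemma prob_history_target_split:
  assumes xs: "xs \<noteq> []" "last xs = (k, \<theta>)" and r: "\<theta> \<le> r" "r \<le> t"
    and extend: "\<And>k' \<theta>'. k' \<in> {1..D} \<Longrightarrow> \<theta>' \<in> {r+1..t} \<Longrightarrow>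
       \<P>(\<omega> in M. history (xs @ [(k', \<theta>')]) \<omega> \<and> target \<omega>) = \<P>(\<omega> in M. history (xs @ [(k', \<theta>')]) \<omega>) * phi_rec k' \<theta>'"
  shows "\<P>(\<omega> in M. history xs \<omega> \<and> r < T (length xs) \<omega> \<and> target \<omega>) = \<P>(\<omega> in M. history xs \<omega>) *
     ((if k = j \<and> u' = t - \<theta> then Hbar D Q (a + \<theta>) k \<theta> t else 0)
      + (\<Sum>k'\<in>{1..D}. \<Sum>\<theta>'\<in>{r+1..t-u'}. qk Q (a + \<theta>) k k' \<theta> \<theta>' * phi_rec k' \<theta>'))"
proof -
  let ?n = "length xs"
  let ?A = "\<lambda>\<omega>. history xs \<omega> \<and> r < T ?n \<omega> \<and> target \<omega>"
  define stay where "stay \<longleftrightarrow> k = j \<and> u' = t - \<theta>"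
  have "\<P>(\<omega> in M. ?A \<omega> \<and> t < T ?n \<omega>) = \<P>(\<omega> in M. history xs \<omega> \<and> t < T ?n \<omega> \<and> stay)"
  proof (rule prob_Collect_cong)
    fix \<omega> assume "\<omega> \<in> space M"
    then show "?A \<omega> \<and> t < T ?n \<omega> \<longleftrightarrow> history xs \<omega> \<and> t < T ?n \<omega> \<and> stay"
      using NN_history[OF _ _ xs, of \<omega> t] history_last[OF _ xs, of \<omega>] r
      by (auto simp: target_def ZZ_def BB_def stay_def)
  qed
  also have "\<dots> = \<P>(\<omega> in M. history xs \<omega>) * (if stay then Hbar D Q (a + \<theta>) k \<theta> t else 0)"
    by (cases stay) (simp_all add: prob_history_survives[OF xs])
  finally have stays: "\<P>(\<omega> in M. ?A \<omega> \<and> t < T ?n \<omega>) = \<dots>" .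
  have "\<P>(\<omega> in M. ?A \<omega> \<and> \<not> t < T ?n \<omega>)
      = (\<Sum>p\<in>{1..D} \<times> {r+1..t}. \<P>(\<omega> in M. history (xs @ [p]) \<omega> \<and> target \<omega>))"
    using Jrange r by (intro prob_sum) (auto simp: history_snoc)
  also have "\<dots> = (\<Sum>k'\<in>{1..D}. \<Sum>\<theta>'\<in>{r+1..t}. \<P>(\<omega> in M. history (xs @ [(k', \<theta>')]) \<omega> \<and> target \<omega>))"
    by (simp add: sum.cartesian_product)
  also have "\<dots> = (\<Sum>k'\<in>{1..D}. \<Sum>\<theta>'\<in>{r+1..t}.
      \<P>(\<omega> in M. history xs \<omega>) * (qk Q (a + \<theta>) k k' \<theta> \<theta>' * phi_rec k' \<theta>'))"
    using xs r by (intro sum.cong refl) (simp add: extend prob_history_snoc)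
  also have "\<dots> = \<P>(\<omega> in M. history xs \<omega>) * (\<Sum>k'\<in>{1..D}. \<Sum>\<theta>'\<in>{r+1..t}. qk Q (a + \<theta>) k k' \<theta> \<theta>' * phi_rec k' \<theta>')"
    by (simp add: sum_distrib_left)
  also have "\<dots> = \<P>(\<omega> in M. history xs \<omega>) * (\<Sum>k'\<in>{1..D}. \<Sum>\<theta>'\<in>{r+1..t-u'}. qk Q (a + \<theta>) k k' \<theta> \<theta>' * phi_rec k' \<theta>')"
    by (simp only: sum_phi_rec_truncate)
  finally have jumps: "\<P>(\<omega> in M. ?A \<omega> \<and> \<not> t < T ?n \<omega>) = \<dots>" .
  show ?thesis
    using prob_conj_split[of ?A "\<lambda>\<omega>. t < T ?n \<omega>"] stays jumps
    by (simp add: distrib_left stay_def)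
qed

lemma prob_history_target:
  assumes "xs \<noteq> []" "last xs = (k, \<theta>)" "\<theta> \<le> t"
  shows "\<P>(\<omega> in M. history xs \<omega> \<and> target \<omega>) = \<P>(\<omega> in M. history xs \<omega>) * phi_rec k \<theta>"
  using assms
proof (induction "t - \<theta>" arbitrary: xs k \<theta> rule: less_induct)
  case less
  have "\<P>(\<omega> in M. history xs \<omega> \<and> target \<omega>) = \<P>(\<omega> in M. history xs \<omega> \<and> \<theta> < T (length xs) \<omega> \<and> target \<omega>)"
    using history_before_next_jump[OF _ _ less.prems(1,2)] by (intro prob_Collect_cong) auto
  also have "\<dots> = \<P>(\<omega> in M. history xs \<omega>) * phi_rec k \<theta>"
    by (subst phi_rec.simps, rule prob_history_target_split[OF less.prems(1,2) order_refl less.prems(3)])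
       (auto intro!: less.hyps)
  finally show ?case .
qed

lemma prob_target_state_event:
  assumes "u \<le> s" "s \<le> t"
  shows "\<P>(\<omega> in M. target \<omega> \<and> state_event s u i \<omega>)
       = (\<Sum>xs\<in>histories s u i. \<P>(\<omega> in M. history xs \<omega>)) *
         ((if i = j \<and> u' = t - (s - u) then Hbar D Q (a + (s - u)) i (s - u) t else 0)
          + (\<Sum>k\<in>{1..D}. \<Sum>\<theta>\<in>{s+1..t-u'}. qk Q (a + (s - u)) i k (s - u) \<theta> * phi_rec k \<theta>))"
proof -
  have "\<P>(\<omega> in M. history xs \<omega> \<and> s < T (length xs) \<omega> \<and> target \<omega>)
      = \<P>(\<omega> in M. history xs \<omega>) *
        ((if i = j \<and> u' = t - (s - u) then Hbar D Q (a + (s - u)) i (s - u) t else 0)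
         + (\<Sum>k\<in>{1..D}. \<Sum>\<theta>\<in>{s+1..t-u'}. qk Q (a + (s - u)) i k (s - u) \<theta> * phi_rec k \<theta>))"
    if "xs \<in> histories s u i" for xs
    using that \<open>s \<le> t\<close>
    by (intro prob_history_target_split) (auto intro: prob_history_target simp: histories_def)
  then show ?thesis
    using prob_state_event_conj[OF \<open>u \<le> s\<close>, of target i] by (simp add: sum_distrib_right)
qed

lemma phi_eq_cond_prob:
  "phi M a J T (a + s - u) i j u s u' t
     = \<P>(\<omega> in M. target \<omega> \<and> state_event s u i \<omega>) / \<P>(\<omega> in M. state_event s u i \<omega>)"
  unfolding phi_def cond_prob_def target_def state_event_def by (rule refl)

lemma phi_eq_phi_rec:
  assumes "\<theta> \<le> t" and event: "\<P>(\<omega> in M. state_event \<theta> 0 k \<omega>) > 0"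
  shows "phi M a J T (a + \<theta>) k j 0 \<theta> u' t = phi_rec k \<theta>"
proof -
  let ?W = "\<Sum>xs\<in>histories \<theta> 0 k. \<P>(\<omega> in M. history xs \<omega>)"
  have "\<P>(\<omega> in M. R \<omega> \<and> state_event \<theta> 0 k \<omega>) = (\<Sum>xs\<in>histories \<theta> 0 k. \<P>(\<omega> in M. history xs \<omega> \<and> R \<omega>))"
    if [measurable]: "{\<omega>\<in>space M. R \<omega>} \<in> sets M" for R
  proof -
    have "\<P>(\<omega> in M. history xs \<omega> \<and> \<theta> < T (length xs) \<omega> \<and> R \<omega>) = \<P>(\<omega> in M. history xs \<omega> \<and> R \<omega>)"
      if "xs \<in> histories \<theta> 0 k" for xs
      using history_before_next_jump[of _ xs k \<theta>] that by (intro prob_Collect_cong) (auto simp: histories_def)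
    then show ?thesis by (simp add: prob_state_event_conj cong: sum.cong)
  qed
  from this[of "\<lambda>_. True"] this[of target] have "\<P>(\<omega> in M. state_event \<theta> 0 k \<omega>) = ?W"
    "\<P>(\<omega> in M. target \<omega> \<and> state_event \<theta> 0 k \<omega>) = ?W * phi_rec k \<theta>"
    using \<open>\<theta> \<le> t\<close> by (auto simp: prob_history_target histories_def sum_distrib_right)
  then show ?thesis
    using event phi_eq_cond_prob[of \<theta> 0 k] by simp
qed

lemma qk_mult_phi_eq_qk_mult_phi_rec:
  assumes "u \<le> s" "s < \<theta>" "\<theta> \<le> t" "k \<in> {1..D}" and event: "\<P>(\<omega> in M. state_event s u i \<omega>) > 0"
  shows "qk Q (a + (s - u)) i k (s - u) \<theta> * phi M a J T (a + \<theta>) k j 0 \<theta> u' t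
       = qk Q (a + (s - u)) i k (s - u) \<theta> * phi_rec k \<theta>"
proof (cases "\<P>(\<omega> in M. state_event \<theta> 0 k \<omega>) > 0")
  case True
  then show ?thesis using phi_eq_phi_rec \<open>\<theta> \<le> t\<close> by simp
next
  case False
  txt \<open>Then \<open>phi\<close> is the junk value \<open>0 / 0\<close>, but a null event cannot be entered from a
    non-null history, so the coefficient \<open>qk\<close> vanishes.\<close>
  then have null: "\<P>(\<omega> in M. state_event \<theta> 0 k \<omega>) = 0" by (simp add: not_less measure_le_0_iff)
  have W: "(\<Sum>xs\<in>histories s u i. \<P>(\<omega> in M. history xs \<omega>)) \<noteq> 0"
    using event prob_state_event[OF \<open>u \<le> s\<close>] by auto
  have "\<exists>xs\<in>histories s u i. \<P>(\<omega> in M. history xs \<omega>) \<noteq> 0"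
  proof (rule ccontr)
    assume "\<not> ?thesis"
    then have "(\<Sum>xs\<in>histories s u i. \<P>(\<omega> in M. history xs \<omega>)) = 0" by (intro sum.neutral) blast
    with W show False ..
  qed
  then obtain xs where xs: "xs \<in> histories s u i" "\<P>(\<omega> in M. history xs \<omega>) \<noteq> 0"
    by blast
  have xs_last: "xs \<noteq> []" "last xs = (i, s - u)" using xs(1) by (auto simp: histories_def)
  have "state_event \<theta> 0 k \<omega>" if "\<omega> \<in> space M" "history (xs @ [(k, \<theta>)]) \<omega>" for \<omega>
    using NN_history[OF that(1,2), of k \<theta> \<theta>] Tmono[OF that(1), of "length xs"] that(2)
    by (auto simp: history_snoc state_event_def ZZ_def BB_def AA_def)
  then have "\<P>(\<omega> in M. history (xs @ [(k, \<theta>)]) \<omega>) \<le> \<P>(\<omega> in M. state_event \<theta> 0 k \<omega>)"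
    by (intro finite_measure_mono) auto
  then have "\<P>(\<omega> in M. history (xs @ [(k, \<theta>)]) \<omega>) = 0"
    using null by (simp add: measure_le_0_iff)
  then have "\<P>(\<omega> in M. history xs \<omega>) * qk Q (a + (s - u)) i k (s - u) \<theta> = 0"
    using prob_history_snoc[OF xs_last \<open>k \<in> {1..D}\<close>, of \<theta>] \<open>s < \<theta>\<close> by simp
  then show ?thesis using xs(2) by simp
qed

lemma phi_renewal_equation:
  assumes us: "u \<le> s" and st: "s \<le> t"
    and event: "\<P>(\<omega> in M. state_event s u i \<omega>) > 0"
  shows "phi M a J T (a + s - u) i j u s u' t =
           (if i = j \<and> u' = t - s + u
            then Hbar D Q (a + s - u) i (s - u) t / Hbar D Q (a + s - u) i (s - u) s else 0)
         + (\<Sum>k\<in>{1..D}. \<Sum>\<theta>\<in>{s+1..t-u'}.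
              qk Q (a + s - u) i k (s - u) \<theta> / Hbar D Q (a + s - u) i (s - u) s
              * phi M a J T (a + \<theta>) k j 0 \<theta> u' t)"
proof -
  have age: "a + s - u = a + (s - u)" and stay: "t - s + u = t - (s - u)" using us st by auto
  define Hs where "Hs = Hbar D Q (a + (s - u)) i (s - u) s"
  define R where "R = (if i = j \<and> u' = t - (s - u) then Hbar D Q (a + (s - u)) i (s - u) t else 0)
      + (\<Sum>k\<in>{1..D}. \<Sum>\<theta>\<in>{s+1..t-u'}. qk Q (a + (s - u)) i k (s - u) \<theta> * phi_rec k \<theta>)"
  define W where "W = (\<Sum>xs\<in>histories s u i. \<P>(\<omega> in M. history xs \<omega>))"
  have event_eq: "\<P>(\<omega> in M. state_event s u i \<omega>) = W * Hs"
    using prob_state_event[OF us] by (simp add: W_def Hs_def)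
  have "W \<noteq> 0" using event event_eq by auto
  then have "phi M a J T (a + s - u) i j u s u' t = R / Hs"
    unfolding phi_eq_cond_prob event_eq prob_target_state_event[OF us st] W_def[symmetric] R_def by simp
  also have "\<dots> = (if i = j \<and> u' = t - (s - u) then Hbar D Q (a + (s - u)) i (s - u) t / Hs else 0)
         + (\<Sum>k\<in>{1..D}. \<Sum>\<theta>\<in>{s+1..t-u'}. qk Q (a + (s - u)) i k (s - u) \<theta> * phi_rec k \<theta> / Hs)"
    by (simp add: R_def add_divide_distrib sum_divide_distrib)
  also have "(\<Sum>k\<in>{1..D}. \<Sum>\<theta>\<in>{s+1..t-u'}. qk Q (a + (s - u)) i k (s - u) \<theta> * phi_rec k \<theta> / Hs)
      = (\<Sum>k\<in>{1..D}. \<Sum>\<theta>\<in>{s+1..t-u'}.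
           qk Q (a + (s - u)) i k (s - u) \<theta> / Hs * phi M a J T (a + \<theta>) k j 0 \<theta> u' t)"
  proof (intro sum.cong refl)
    fix k \<theta> assume k: "k \<in> {1..D}" and "\<theta> \<in> {s+1..t-u'}"
    then have "s < \<theta>" "\<theta> \<le> t" by auto
    then have "qk Q (a + (s - u)) i k (s - u) \<theta> * phi_rec k \<theta>
        = qk Q (a + (s - u)) i k (s - u) \<theta> * phi M a J T (a + \<theta>) k j 0 \<theta> u' t"
      by (rule qk_mult_phi_eq_qk_mult_phi_rec[OF us _ _ k event, symmetric])
    then show "qk Q (a + (s - u)) i k (s - u) \<theta> * phi_rec k \<theta> / Hs
        = qk Q (a + (s - u)) i k (s - u) \<theta> / Hs * phi M a J T (a + \<theta>) k j 0 \<theta> u' t"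
      by simp
  qed
  finally show ?thesis unfolding age stay Hs_def .
qed

end

end

theorem proposition1:
  fixes M :: "'w measure" and D a :: nat
    and J T :: "nat \<Rightarrow> 'w \<Rightarrow> nat"
    and Q :: "nat \<Rightarrow> nat \<Rightarrow> nat \<Rightarrow> nat \<Rightarrow> nat \<Rightarrow> real"
    and i j u s u' t :: nat
  assumes P: "prob_space M"
    and measJ: "\<And>n. J n \<in> measurable M (count_space UNIV)"
    and measT: "\<And>n. T n \<in> measurable M (count_space UNIV)"
    and Jrange: "\<And>n \<omega>. \<omega> \<in> space M \<Longrightarrow> J n \<omega> \<in> {1..D}"
    and T0: "\<And>\<omega>. \<omega> \<in> space M \<Longrightarrow> T 0 \<omega> = 0"
    and Tmono: "\<And>n \<omega>. \<omega> \<in> space M \<Longrightarrow> T n \<omega> < T (Suc n) \<omega>"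
    and MRP: "\<And>n js ts k r.
       k \<in> {1..D} \<Longrightarrow>
       \<P>(\<omega> in M. \<forall>h\<le>n. J h \<omega> = js h \<and> T h \<omega> = ts h \<and> AA a T h \<omega> = a + ts h) > 0 \<Longrightarrow>
       cond_prob M (\<lambda>\<omega>. J (Suc n) \<omega> = k \<and> T (Suc n) \<omega> \<le> r)
                   (\<lambda>\<omega>. \<forall>h\<le>n. J h \<omega> = js h \<and> T h \<omega> = ts h \<and> AA a T h \<omega> = a + ts h)
         = Q (a + ts n) (js n) k (ts n) r"
    and ij: "i \<in> {1..D}" "j \<in> {1..D}"
    and us: "u \<le> s" and st: "s \<le> t"
    and Hpos: "Hbar D Q (a + s - u) i (s - u) s > 0"
    and cpos: "\<P>(\<omega> in M. ZZ J T s \<omega> = i \<and> BB T s \<omega> = u \<and> AA a T (NN T s \<omega>) \<omega> = a + s - u) > 0"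
  shows "phi M a J T (a + s - u) i j u s u' t =
           (if i = j \<and> u' = t - s + u
            then Hbar D Q (a + s - u) i (s - u) t / Hbar D Q (a + s - u) i (s - u) s else 0)
         + (\<Sum>k\<in>{1..D}. \<Sum>\<theta>\<in>{s+1..t-u'}.
              qk Q (a + s - u) i k (s - u) \<theta> / Hbar D Q (a + s - u) i (s - u) s
              * phi M a J T (a + \<theta>) k j 0 \<theta> u' t)"
proof -
  interpret age_indexed_mrp M D a J T Q
    by (intro age_indexed_mrp.intro[OF P] age_indexed_mrp_axioms.intro) (fact measJ measT Jrange T0 Tmono MRP)+
  have "\<P>(\<omega> in M. state_event s u i \<omega>) > 0"
    using cpos unfolding state_event_def .
  then show ?thesis
    by (rule phi_renewal_equation[OF us st])
qed

end
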